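(* Let $(\Phi,D)$ and $(\Psi,E)$ be domain-free s-continuous information algebras. Then $([\Phi\rightarrow\Psi]_c,D\times E)$, with pointwise combination $(f\otimes g)(\phi)=f(\phi)\otimes g(\phi)$ and focusing $f^{\Rightarrow(x,y)}(\phi)=(f(\phi^{\Rightarrow x}))^{\Rightarrow y}$, is a domain-free continuous information algebra.
   Context: A domain-free information algebra $(\Phi,D)$ consists of a set $\Phi$, a lattice $D$, a combination $\otimes$ and a focusing $(\psi,x)\mapsto\psi^{\Rightarrow x}$ ($x\in D$) such that: $\otimes$ is associative, commutative with neutral element $e$; $(\psi^{\Rightarrow y})^{\Rightarrow x}=\psi^{\Rightarrow x\wedge y}$; $(\phi^{\Rightarrow x}\otimes\psi)^{\Rightarrow x}=\phi^{\Rightarrow x}\otimes\psi^{\Rightarrow x}$; every $\psi$ has some $x$ with $\psi^{\Rightarrow x}=\psi$; $\psi\otimes\psi^{\Rightarrow x}=\psi$. Order: $\psi\le\phi$ iff $\psi\otimes\phi=\phi$; suprema refer to this order. $a\ll b$ means: for every directed $X$ with $b\le\vee X$ there is $c\in X$ with $a\le c$. $(\Phi,D)$, with $D$ having a top element, is continuous (resp. s-continuous) if there exists $\Gamma\subseteq\Phi$, closed under combination and containing $e$, such that every directed subset of $\Gamma$ has a supremum in $\Phi$ and $\phi=\vee\{\psi\in\Gamma:\psi\ll\phi\}$ for all $\phi$ (resp. $\phi^{\Rightarrow x}=\vee\{\psi\in\Gamma:\psi=\psi^{\Rightarrow x}\ll\phi\}$ for all $\phi,x$). $[\Phi\rightarrow\Psi]_c$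 denotes the set of maps $f:\Phi\to\Psi$ with $f(\vee X)=\vee f(X)$ for every directed $X\subseteq\Phi$; $D\times E$ is the product lattice. *)

theory Defs
  imports Main "HOL-Library.Product_Order"
begin

definition dfia :: "'a set \<Rightarrow> ('a \<Rightarrow> 'a \<Rightarrow> 'a) \<Rightarrow> 'a \<Rightarrow> ('a \<Rightarrow> 'd::lattice \<Rightarrow> 'a) \<Rightarrow> bool" where
  "dfia Phi comb e foc \<longleftrightarrow>
     (\<forall>a\<in>Phi. \<forall>b\<in>Phi. comb a b \<in> Phi) \<and> e \<in> Phi \<and>
     (\<forall>a\<in>Phi. \<forall>x. foc a x \<in> Phi) \<and>
     (\<forall>a\<in>Phi. \<forall>b\<in>Phi. \<forall>c\<in>Phi. comb (comb a b) c = comb a (comb b c)) \<and>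
     (\<forall>a\<in>Phi. \<forall>b\<in>Phi. comb a b = comb b a) \<and>
     (\<forall>a\<in>Phi. comb a e = a) \<and>
     (\<forall>a\<in>Phi. \<forall>x y. foc (foc a y) x = foc a (inf x y)) \<and>
     (\<forall>a\<in>Phi. \<forall>b\<in>Phi. \<forall>x. foc (comb (foc a x) b) x = comb (foc a x) (foc b x)) \<and>
     (\<forall>a\<in>Phi. \<exists>x. foc a x = a) \<and>
     (\<forall>a\<in>Phi. \<forall>x. comb a (foc a x) = a)"

definition ileq :: "('a \<Rightarrow> 'a \<Rightarrow> 'a) \<Rightarrow> 'a \<Rightarrow> 'a \<Rightarrow> bool" where
  "ileq comb a b \<longleftrightarrow> comb a b = b"

definition is_isup :: "'a set \<Rightarrow> ('a \<Rightarrow> 'a \<Rightarrow> 'a) \<Rightarrow> 'a set \<Rightarrow> 'a \<Rightarrow> bool" where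
  "is_isup Phi comb X s \<longleftrightarrow> s \<in> Phi \<and> (\<forall>a\<in>X. ileq comb a s) \<and>
     (\<forall>u\<in>Phi. (\<forall>a\<in>X. ileq comb a u) \<longrightarrow> ileq comb s u)"

definition idirected :: "('a \<Rightarrow> 'a \<Rightarrow> 'a) \<Rightarrow> 'a set \<Rightarrow> bool" where
  "idirected comb X \<longleftrightarrow> X \<noteq> {} \<and>
     (\<forall>a\<in>X. \<forall>b\<in>X. \<exists>c\<in>X. ileq comb a c \<and> ileq comb b c)"

definition way_below :: "'a set \<Rightarrow> ('a \<Rightarrow> 'a \<Rightarrow> 'a) \<Rightarrow> 'a \<Rightarrow> 'a \<Rightarrow> bool" where
  "way_below Phi comb a b \<longleftrightarrow>
     (\<forall>X s. X \<subseteq> Phi \<longrightarrow> idirected comb X \<longrightarrow> is_isup Phi comb X s \<longrightarrow> ileq comb b s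
        \<longrightarrow> (\<exists>c\<in>X. ileq comb a c))"

definition basis_ok :: "'a set \<Rightarrow> ('a \<Rightarrow> 'a \<Rightarrow> 'a) \<Rightarrow> 'a \<Rightarrow> 'a set \<Rightarrow> bool" where
  "basis_ok Phi comb e G \<longleftrightarrow> G \<subseteq> Phi \<and> e \<in> G \<and> (\<forall>a\<in>G. \<forall>b\<in>G. comb a b \<in> G) \<and>
     (\<forall>X. X \<subseteq> G \<longrightarrow> idirected comb X \<longrightarrow> (\<exists>s. is_isup Phi comb X s))"

definition continuous_ia :: "'a set \<Rightarrow> ('a \<Rightarrow> 'a \<Rightarrow> 'a) \<Rightarrow> 'a \<Rightarrow> ('a \<Rightarrow> 'd::lattice \<Rightarrow> 'a) \<Rightarrow> bool" where
  "continuous_ia Phi comb e foc \<longleftrightarrow> dfia Phi comb e foc \<and> (\<exists>t::'d. \<forall>x. x \<le> t) \<and>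
     (\<exists>G. basis_ok Phi comb e G \<and>
        (\<forall>p\<in>Phi. is_isup Phi comb {a\<in>G. way_below Phi comb a p} p))"

definition s_continuous_ia :: "'a set \<Rightarrow> ('a \<Rightarrow> 'a \<Rightarrow> 'a) \<Rightarrow> 'a \<Rightarrow> ('a \<Rightarrow> 'd::lattice \<Rightarrow> 'a) \<Rightarrow> bool" where
  "s_continuous_ia Phi comb e foc \<longleftrightarrow> dfia Phi comb e foc \<and> (\<exists>t::'d. \<forall>x. x \<le> t) \<and>
     (\<exists>G. basis_ok Phi comb e G \<and>
        (\<forall>p\<in>Phi. \<forall>x. is_isup Phi comb {a\<in>G. foc a x = a \<and> way_below Phi comb a p} (foc p x)))"

text \<open>[Phi \<rightarrow> Psi]_c: Scott-continuous maps (extensional: undefined outside Phi).\<close>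
definition cont_maps :: "'a set \<Rightarrow> ('a \<Rightarrow> 'a \<Rightarrow> 'a) \<Rightarrow> 'b set \<Rightarrow> ('b \<Rightarrow> 'b \<Rightarrow> 'b) \<Rightarrow> ('a \<Rightarrow> 'b) set" where
  "cont_maps Phi combP Psi combQ = {f. (\<forall>p\<in>Phi. f p \<in> Psi) \<and> (\<forall>p. p \<notin> Phi \<longrightarrow> f p = undefined) \<and>
     (\<forall>X s. X \<subseteq> Phi \<longrightarrow> idirected combP X \<longrightarrow> is_isup Phi combP X s \<longrightarrow>
        is_isup Psi combQ (f ` X) (f s))}"

definition fun_comb :: "'a set \<Rightarrow> ('b \<Rightarrow> 'b \<Rightarrow> 'b) \<Rightarrow> ('a \<Rightarrow> 'b) \<Rightarrow> ('a \<Rightarrow> 'b) \<Rightarrow> ('a \<Rightarrow> 'b)" where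
  "fun_comb Phi combQ f g = (\<lambda>p. if p \<in> Phi then combQ (f p) (g p) else undefined)"

definition fun_neutral :: "'a set \<Rightarrow> 'b \<Rightarrow> ('a \<Rightarrow> 'b)" where
  "fun_neutral Phi eQ = (\<lambda>p. if p \<in> Phi then eQ else undefined)"

definition fun_foc :: "'a set \<Rightarrow> ('a \<Rightarrow> 'd \<Rightarrow> 'a) \<Rightarrow> ('b \<Rightarrow> 'e \<Rightarrow> 'b) \<Rightarrow> ('a \<Rightarrow> 'b) \<Rightarrow> ('d \<times> 'e) \<Rightarrow> ('a \<Rightarrow> 'b)" where
  "fun_foc Phi focP focQ f xy = (\<lambda>p. if p \<in> Phi then focQ (f (focP p (fst xy))) (snd xy) else undefined)"

end

theory Submission
  imports Defs
begin

text \<open>Combination makes each algebra a join-semilattice with least element \<open>e\<close>, and s-continuity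
  (focusing on the top of the lattice) makes it a continuous dcpo. Hence directed suprema of
  Scott-continuous maps exist and are computed pointwise. For \<open>a \<in> \<Phi>\<close> and \<open>b \<in> \<Psi>\<close> the step
  function with value \<open>b\<close> on the points way above \<open>a\<close> and \<open>e\<close> elsewhere is Scott-continuous,
  because by interpolation the set of points way above \<open>a\<close> is Scott open, and it is way below
  every \<open>f\<close> with \<open>b \<lless> f a\<close>. Interpolation together with the continuity of \<open>f\<close> shows that these
  step functions determine \<open>f\<close>, so the whole function space is a basis witnessing continuity.
  The remaining axioms hold pointwise: s-continuity makes focusing Scott-continuous, so focused
  continuous maps stay continuous, and focusing on the top of \<open>D \<times> E\<close> is the identity.\<close>

section \<open>Semilattices and the way-below relation\<close>

locale isemilattice =
  fixes Phi :: "'a set" and comb :: "'a \<Rightarrow> 'a \<Rightarrow> 'a" and e :: 'a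
  assumes comb_closed: "a \<in> Phi \<Longrightarrow> b \<in> Phi \<Longrightarrow> comb a b \<in> Phi"
    and neutral_in: "e \<in> Phi"
    and comb_assoc: "a \<in> Phi \<Longrightarrow> b \<in> Phi \<Longrightarrow> c \<in> Phi \<Longrightarrow> comb (comb a b) c = comb a (comb b c)"
    and comb_commute: "a \<in> Phi \<Longrightarrow> b \<in> Phi \<Longrightarrow> comb a b = comb b a"
    and comb_neutral: "a \<in> Phi \<Longrightarrow> comb a e = a"
    and comb_idem: "a \<in> Phi \<Longrightarrow> comb a a = a"
begin

abbreviation le :: "'a \<Rightarrow> 'a \<Rightarrow> bool" where "le \<equiv> ileq comb"
abbreviation wb :: "'a \<Rightarrow> 'a \<Rightarrow> bool" where "wb \<equiv> way_below Phi comb"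

lemma le_refl: "a \<in> Phi \<Longrightarrow> le a a"
  by (simp add: ileq_def comb_idem)

lemma le_trans: "a \<in> Phi \<Longrightarrow> b \<in> Phi \<Longrightarrow> c \<in> Phi \<Longrightarrow> le a b \<Longrightarrow> le b c \<Longrightarrow> le a c"
  unfolding ileq_def using comb_assoc[of a b c] by simp

lemma le_antisym: "a \<in> Phi \<Longrightarrow> b \<in> Phi \<Longrightarrow> le a b \<Longrightarrow> le b a \<Longrightarrow> a = b"
  unfolding ileq_def using comb_commute[of a b] by simp

lemma le_comb_left: "a \<in> Phi \<Longrightarrow> b \<in> Phi \<Longrightarrow> le a (comb a b)"
  unfolding ileq_def using comb_assoc[of a a b] comb_idem[of a] by simp

lemma le_comb_right: "a \<in> Phi \<Longrightarrow> b \<in> Phi \<Longrightarrow> le b (comb a b)"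
  unfolding ileq_def using comb_assoc[of b a b] comb_assoc[of a b b] comb_commute[of a b] comb_idem[of b]
  by simp

lemma comb_least: "a \<in> Phi \<Longrightarrow> b \<in> Phi \<Longrightarrow> u \<in> Phi \<Longrightarrow> le a u \<Longrightarrow> le b u \<Longrightarrow> le (comb a b) u"
  unfolding ileq_def using comb_assoc[of a b u] by simp

lemma neutral_le: "a \<in> Phi \<Longrightarrow> le e a"
  unfolding ileq_def using comb_commute[of e a] neutral_in comb_neutral[of a] by simp

lemma isup_in: "is_isup Phi comb X s \<Longrightarrow> s \<in> Phi"
  unfolding is_isup_def by blast

lemma isup_upper: "is_isup Phi comb X s \<Longrightarrow> a \<in> X \<Longrightarrow> le a s"
  unfolding is_isup_def by blast

lemma isup_least: "is_isup Phi comb X s \<Longrightarrow> u \<in> Phi \<Longrightarrow> (\<And>a. a \<in> X \<Longrightarrow> le a u) \<Longrightarrow> le s u"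
  unfolding is_isup_def by blast

lemma isup_unique: "is_isup Phi comb X s \<Longrightarrow> is_isup Phi comb X s' \<Longrightarrow> s = s'"
  unfolding is_isup_def using le_antisym by blast

lemma isup_singleton: "a \<in> Phi \<Longrightarrow> is_isup Phi comb {a} a"
  unfolding is_isup_def using le_refl by auto

lemma isup_pair: "a \<in> Phi \<Longrightarrow> b \<in> Phi \<Longrightarrow> le a b \<Longrightarrow> is_isup Phi comb {a, b} b"
  unfolding is_isup_def using le_refl by blast

lemma idirected_singleton: "a \<in> Phi \<Longrightarrow> idirected comb {a}"
  unfolding idirected_def using le_refl by auto

lemma idirected_pair: "b \<in> Phi \<Longrightarrow> le a b \<Longrightarrow> idirected comb {a, b}"
  unfolding idirected_def using le_refl by blast

lemma idirected_image_mono: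
  assumes X: "X \<subseteq> Phi" "idirected comb X"
    and mono: "\<And>p q. p \<in> Phi \<Longrightarrow> q \<in> Phi \<Longrightarrow> le p q \<Longrightarrow> ileq comb' (f p) (f q)"
  shows "idirected comb' (f ` X)"
  unfolding idirected_def
proof (intro conjI ballI)
  show "f ` X \<noteq> {}" using X(2) unfolding idirected_def by blast
  fix u v assume "u \<in> f ` X" "v \<in> f ` X"
  then obtain p q where pq: "p \<in> X" "q \<in> X" "u = f p" "v = f q" by blast
  then obtain c where "c \<in> X" "le p c" "le q c" using X(2) unfolding idirected_def by blast
  then show "\<exists>c\<in>f ` X. ileq comb' u c \<and> ileq comb' v c" using X(1) mono pq by blast
qed

lemma comb_mono:
  "a \<in> Phi \<Longrightarrow> b \<in> Phi \<Longrightarrow> a' \<in> Phi \<Longrightarrow> b' \<in> Phi \<Longrightarrow> le a a' \<Longrightarrow> le b b'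
    \<Longrightarrow> le (comb a b) (comb a' b')"
  using comb_least comb_closed le_trans le_comb_left le_comb_right by meson

lemma isup_image_comb:
  assumes fX: "f ` X \<subseteq> Phi" and gX: "g ` X \<subseteq> Phi"
    and f: "is_isup Phi comb (f ` X) s" and g: "is_isup Phi comb (g ` X) t"
  shows "is_isup Phi comb ((\<lambda>p. comb (f p) (g p)) ` X) (comb s t)"
  unfolding is_isup_def
proof (intro conjI ballI impI)
  have st: "s \<in> Phi" "t \<in> Phi" using f g isup_in by blast+
  then show "comb s t \<in> Phi" by (rule comb_closed)
  fix c assume "c \<in> (\<lambda>p. comb (f p) (g p)) ` X"
  then obtain p where p: "p \<in> X" "c = comb (f p) (g p)" by blast
  have "f p \<in> Phi" "g p \<in> Phi" "le (f p) s" "le (g p) t"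
    using fX gX f g p isup_upper by blast+
  then show "le c (comb s t)" using p(2) st comb_mono by blast
next
  fix u assume u: "u \<in> Phi" "\<forall>c\<in>(\<lambda>p. comb (f p) (g p)) ` X. le c u"
  have "le (f p) u \<and> le (g p) u" if p: "p \<in> X" for p
  proof -
    have fg: "f p \<in> Phi" "g p \<in> Phi" using p fX gX by blast+
    have "le (comb (f p) (g p)) u" using u p by blast
    then show ?thesis
      using fg u(1) comb_closed le_trans le_comb_left le_comb_right by meson
  qed
  then have "le s u" "le t u" using f g u(1) isup_least by blast+
  then show "le (comb s t) u" using f g u(1) isup_in comb_least by blast
qed

lemma way_below_le: "b \<in> Phi \<Longrightarrow> wb a b \<Longrightarrow> le a b"
  unfolding way_below_def
  using idirected_singleton isup_singleton le_refl by blast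

lemma way_below_mono_right: "b \<in> Phi \<Longrightarrow> b' \<in> Phi \<Longrightarrow> wb a b \<Longrightarrow> le b b' \<Longrightarrow> wb a b'"
  unfolding way_below_def by (meson isup_in le_trans)

lemma way_below_mono_left: "a \<in> Phi \<Longrightarrow> a' \<in> Phi \<Longrightarrow> le a a' \<Longrightarrow> wb a' b \<Longrightarrow> wb a b"
  unfolding way_below_def by (meson le_trans subsetD)

lemma way_below_comb:
  assumes a: "a \<in> Phi" "a' \<in> Phi" and "wb a b" "wb a' b"
  shows "wb (comb a a') b"
  unfolding way_below_def
proof (intro allI impI)
  fix X s assume X: "X \<subseteq> Phi" "idirected comb X" "is_isup Phi comb X s" "le b s"
  obtain c1 c2 where c: "c1 \<in> X" "le a c1" "c2 \<in> X" "le a' c2"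
    using assms(3,4) X unfolding way_below_def by meson
  then obtain c where "c \<in> X" "le c1 c" "le c2 c" using X(2) unfolding idirected_def by blast
  with c X(1) a have "le (comb a a') c"
    by (meson comb_least le_trans subsetD)
  with \<open>c \<in> X\<close> show "\<exists>c\<in>X. le (comb a a') c" by blast
qed

lemma neutral_way_below: "wb e b"
  unfolding way_below_def idirected_def using neutral_le by blast

end

locale continuous_isemilattice = isemilattice +
  fixes G :: "'a set"
  assumes basis_subset: "G \<subseteq> Phi"
    and neutral_basis: "e \<in> G"
    and comb_basis: "a \<in> G \<Longrightarrow> b \<in> G \<Longrightarrow> comb a b \<in> G"
    and basis_isup_exists: "X \<subseteq> G \<Longrightarrow> idirected comb X \<Longrightarrow> \<exists>s. is_isup Phi comb X s"
    and basis_approx: "p \<in> Phi \<Longrightarrow> is_isup Phi comb {a \<in> G. wb a p} p"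
begin

lemma basis_in: "a \<in> G \<Longrightarrow> a \<in> Phi"
  using basis_subset by blast

lemma basis_approx_idirected: "p \<in> Phi \<Longrightarrow> idirected comb {a \<in> G. wb a p}"
  unfolding idirected_def
proof (intro conjI ballI)
  show "{a \<in> G. wb a p} \<noteq> {}" using neutral_basis neutral_way_below by blast
  fix a b assume "a \<in> {a \<in> G. wb a p}" "b \<in> {a \<in> G. wb a p}"
  then have "a \<in> G" "b \<in> G" "wb a p" "wb b p" by auto
  then have "comb a b \<in> {a \<in> G. wb a p}" by (simp add: basis_in comb_basis way_below_comb)
  then show "\<exists>c\<in>{a \<in> G. wb a p}. le a c \<and> le b c"
    using \<open>a \<in> G\<close> \<open>b \<in> G\<close> by (meson basis_in le_comb_left le_comb_right)
qed

text \<open>Every directed set has the same supremum as the directed set of basis elements way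
  below one of its members.\<close>

lemma isup_exists:
  assumes Y: "Y \<subseteq> Phi" "idirected comb Y"
  shows "\<exists>s. is_isup Phi comb Y s"
proof -
  define Z where "Z = {c \<in> G. \<exists>y\<in>Y. wb c y}"
  have "idirected comb Z" unfolding idirected_def
  proof (intro conjI ballI)
    show "Z \<noteq> {}" using Y(2) neutral_basis neutral_way_below unfolding Z_def idirected_def by blast
  next
    fix c1 c2 assume "c1 \<in> Z" "c2 \<in> Z"
    then obtain y1 y2 where y: "y1 \<in> Y" "wb c1 y1" "y2 \<in> Y" "wb c2 y2" "c1 \<in> G" "c2 \<in> G"
      unfolding Z_def by blast
    then obtain y where "y \<in> Y" "le y1 y" "le y2 y" using Y(2) unfolding idirected_def by blast
    with y Y(1) have "wb c1 y" "wb c2 y"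
      using way_below_mono_right[of y1 y c1] way_below_mono_right[of y2 y c2] by auto
    then have "wb (comb c1 c2) y" using y by (simp add: basis_in way_below_comb)
    then have "comb c1 c2 \<in> Z" unfolding Z_def using y \<open>y \<in> Y\<close> comb_basis by blast
    then show "\<exists>c\<in>Z. le c1 c \<and> le c2 c" using y basis_in le_comb_left le_comb_right by blast
  qed
  moreover have "Z \<subseteq> G" unfolding Z_def by blast
  ultimately obtain s where s: "is_isup Phi comb Z s" using basis_isup_exists by blast
  have "is_isup Phi comb Y s" unfolding is_isup_def
  proof (intro conjI ballI impI)
    show "s \<in> Phi" using s isup_in by blast
  next
    fix y assume "y \<in> Y"
    then have "le a s" if "a \<in> G" "wb a y" for a
      using that s isup_upper[of Z s a] unfolding Z_def by blast
    then show "le y s"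
      using isup_least[OF basis_approx] \<open>y \<in> Y\<close> Y(1) s isup_in by blast
  next
    fix u assume u: "u \<in> Phi" "\<forall>a\<in>Y. le a u"
    have "le c u" if "c \<in> Z" for c
    proof -
      obtain y where y: "c \<in> G" "y \<in> Y" "wb c y" using \<open>c \<in> Z\<close> unfolding Z_def by blast
      then show ?thesis using Y(1) u basis_in[of c] way_below_le[of y c] le_trans[of c y u] by blast
    qed
    then show "le s u" using s u(1) isup_least by blast
  qed
  then show ?thesis by blast
qed

lemma isup_basis_way_below_way_below:
  assumes p: "p \<in> Phi"
  shows "is_isup Phi comb {c \<in> G. \<exists>d\<in>G. wb d p \<and> wb c d} p"
  unfolding is_isup_def
proof (intro conjI ballI impI)
  show "p \<in> Phi" by fact
next
  fix c assume "c \<in> {c \<in> G. \<exists>d\<in>G. wb d p \<and> wb c d}"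
  then obtain d where "d \<in> G" "wb d p" "wb c d" "c \<in> G" by blast
  then show "le c p"
    using p basis_in[of c] basis_in[of d] way_below_le[of d c] way_below_le[of p d] le_trans[of c d p]
    by blast
next
  fix u assume u: "u \<in> Phi" "\<forall>c\<in>{c \<in> G. \<exists>d\<in>G. wb d p \<and> wb c d}. le c u"
  have "le d u" if "d \<in> G" "wb d p" for d
    using isup_least[OF basis_approx[of d]] that u basis_in by blast
  then show "le p u" using isup_least[OF basis_approx[OF p]] u(1) by blast
qed

lemma way_below_interpolate:
  assumes a: "a \<in> Phi" and p: "p \<in> Phi" and w: "wb a p"
  shows "\<exists>d\<in>Phi. wb a d \<and> wb d p"
proof -
  define X where "X = {c \<in> G. \<exists>d\<in>G. wb d p \<and> wb c d}"
  have "idirected comb X" unfolding idirected_def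
  proof (intro conjI ballI)
    show "X \<noteq> {}" unfolding X_def using neutral_basis neutral_way_below by blast
  next
    fix c1 c2 assume "c1 \<in> X" "c2 \<in> X"
    then obtain d1 d2 where d: "d1 \<in> G" "wb d1 p" "wb c1 d1" "d2 \<in> G" "wb d2 p" "wb c2 d2"
      "c1 \<in> G" "c2 \<in> G"
      unfolding X_def by blast
    define d where "d = comb d1 d2"
    have dG: "d \<in> G" "wb d p" unfolding d_def using d by (simp_all add: basis_in comb_basis way_below_comb)
    have "le d1 d" "le d2 d" unfolding d_def using d(1,4) basis_in le_comb_left le_comb_right by blast+
    then have "wb c1 d" "wb c2 d"
      using d dG basis_in way_below_mono_right[of d1 d c1] way_below_mono_right[of d2 d c2] by auto
    then have "comb c1 c2 \<in> X" unfolding X_def using dG d by (auto simp: basis_in comb_basis way_below_comb)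
    then show "\<exists>c\<in>X. le c1 c \<and> le c2 c"
      using d(7,8) basis_in le_comb_left[of c1 c2] le_comb_right[of c1 c2] by blast
  qed
  moreover have "is_isup Phi comb X p" unfolding X_def by (rule isup_basis_way_below_way_below[OF p])
  moreover have "X \<subseteq> Phi" unfolding X_def using basis_subset by blast
  ultimately obtain c where "c \<in> X" "le a c"
    using w le_refl[OF p] unfolding way_below_def by blast
  then obtain d where "d \<in> G" "wb d p" "wb c d" "c \<in> G" unfolding X_def by blast
  then show ?thesis
    using a \<open>le a c\<close> basis_in way_below_mono_left[of a c d] by blast
qed

text \<open>By interpolation, the elements way above a fixed one form a Scott-open set.\<close>

lemma way_below_isup_member:
  assumes X: "X \<subseteq> Phi" "idirected comb X" "is_isup Phi comb X s"
    and a: "a \<in> Phi" and w: "wb a s"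
  shows "\<exists>x\<in>X. wb a x"
proof -
  have s: "s \<in> Phi" using X isup_in by blast
  obtain d where d: "d \<in> Phi" "wb a d" "wb d s" using way_below_interpolate[OF a s w] by blast
  then obtain x where "x \<in> X" "le d x" using X le_refl[OF s] unfolding way_below_def by blast
  then show ?thesis using d X(1) way_below_mono_right by blast
qed

end

section \<open>Scott-continuous maps\<close>

definition scott_cont :: "'a set \<Rightarrow> ('a \<Rightarrow> 'a \<Rightarrow> 'a) \<Rightarrow> 'b set \<Rightarrow> ('b \<Rightarrow> 'b \<Rightarrow> 'b) \<Rightarrow> ('a \<Rightarrow> 'b) \<Rightarrow> bool"
  where "scott_cont Phi combP Psi combQ f \<longleftrightarrow>
    (\<forall>X s. X \<subseteq> Phi \<longrightarrow> idirected combP X \<longrightarrow> is_isup Phi combP X s \<longrightarrow>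
       is_isup Psi combQ (f ` X) (f s))"

lemma scott_contD:
  "scott_cont Phi combP Psi combQ f \<Longrightarrow> X \<subseteq> Phi \<Longrightarrow> idirected combP X \<Longrightarrow> is_isup Phi combP X s
    \<Longrightarrow> is_isup Psi combQ (f ` X) (f s)"
  unfolding scott_cont_def by blast

lemma cont_maps_iff:
  "f \<in> cont_maps Phi combP Psi combQ \<longleftrightarrow>
    (\<forall>p\<in>Phi. f p \<in> Psi) \<and> (\<forall>p. p \<notin> Phi \<longrightarrow> f p = undefined) \<and> scott_cont Phi combP Psi combQ f"
  unfolding cont_maps_def scott_cont_def by blast

lemma cont_maps_in: "f \<in> cont_maps Phi combP Psi combQ \<Longrightarrow> p \<in> Phi \<Longrightarrow> f p \<in> Psi"
  unfolding cont_maps_iff by blast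

lemma cont_maps_undefined: "f \<in> cont_maps Phi combP Psi combQ \<Longrightarrow> p \<notin> Phi \<Longrightarrow> f p = undefined"
  unfolding cont_maps_iff by blast

lemma cont_maps_scott_cont: "f \<in> cont_maps Phi combP Psi combQ \<Longrightarrow> scott_cont Phi combP Psi combQ f"
  unfolding cont_maps_iff by blast

lemma (in isemilattice) scott_cont_mono:
  assumes "scott_cont Phi comb Psi combQ f" "p \<in> Phi" "q \<in> Phi" "le p q"
  shows "ileq combQ (f p) (f q)"
proof -
  have "is_isup Psi combQ (f ` {p, q}) (f q)"
    using scott_contD[OF assms(1) _ idirected_pair isup_pair] assms(2-4) by blast
  then show ?thesis unfolding is_isup_def by blast
qed

section \<open>Information algebras\<close>

lemma dfia_isemilattice:
  assumes "dfia Phi comb e foc"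
  shows "isemilattice Phi comb e"
proof -
  note A = assms[unfolded dfia_def]
  have "comb a a = a" if a: "a \<in> Phi" for a
  proof -
    \<comment> \<open>idempotency: \<open>a = a \<otimes> a\<^sup>\<Rightarrow>\<^sup>x\<close> for any support \<open>x\<close> of \<open>a\<close>, i.e. \<open>a\<^sup>\<Rightarrow>\<^sup>x = a\<close>\<close>
    obtain x where "foc a x = a" using A a by blast
    then show ?thesis using A a by metis
  qed
  then show ?thesis using A by unfold_locales blast+
qed

lemma dfia_foc_closed: "dfia Phi comb e foc \<Longrightarrow> a \<in> Phi \<Longrightarrow> foc a x \<in> Phi"
  unfolding dfia_def by blast

lemma dfia_foc_foc: "dfia Phi comb e foc \<Longrightarrow> a \<in> Phi \<Longrightarrow> foc (foc a y) x = foc a (inf x y)"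
  unfolding dfia_def by blast

lemma dfia_foc_comb:
  "dfia Phi comb e foc \<Longrightarrow> a \<in> Phi \<Longrightarrow> b \<in> Phi \<Longrightarrow> foc (comb (foc a x) b) x = comb (foc a x) (foc b x)"
  unfolding dfia_def by blast

lemma dfia_comb_foc: "dfia Phi comb e foc \<Longrightarrow> a \<in> Phi \<Longrightarrow> comb a (foc a x) = a"
  unfolding dfia_def by blast

lemma dfia_foc_le:
  assumes "dfia Phi comb e foc" "a \<in> Phi"
  shows "ileq comb (foc a x) a"
  using assms dfia_comb_foc[OF assms] dfia_foc_closed[OF assms] isemilattice.comb_commute[OF dfia_isemilattice]
  unfolding ileq_def by metis

lemma dfia_foc_mono:
  assumes D: "dfia Phi comb e foc" and ab: "a \<in> Phi" "b \<in> Phi" "ileq comb a b"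
  shows "ileq comb (foc a x) (foc b x)"
proof -
  interpret isemilattice Phi comb e using dfia_isemilattice[OF D] .
  have "le (foc a x) b" using dfia_foc_closed[OF D] dfia_foc_le[OF D] ab le_trans by blast
  then have "comb (foc a x) b = b" unfolding ileq_def .
  then show ?thesis using dfia_foc_comb[OF D ab(1,2), of x] unfolding ileq_def by simp
qed

lemma dfia_foc_top:
  assumes D: "dfia Phi comb e foc" and top: "\<forall>x. x \<le> t" and a: "a \<in> Phi"
  shows "foc a t = a"
proof -
  obtain x where x: "foc a x = a" using D a unfolding dfia_def by blast
  have "foc a t = foc (foc a x) t" using x by simp
  also have "\<dots> = foc a (inf t x)" using dfia_foc_foc[OF D a] .
  also have "inf t x = x" using top by (simp add: inf_absorb2)
  finally show ?thesis using x by simp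
qed

lemma s_continuous_continuous_isemilattice:
  assumes S: "s_continuous_ia Phi comb e (foc :: 'a \<Rightarrow> 'd::lattice \<Rightarrow> 'a)"
  shows "\<exists>G. continuous_isemilattice Phi comb e G"
proof -
  obtain t :: 'd and G where D: "dfia Phi comb e foc" and top: "\<forall>x. x \<le> t"
    and G: "basis_ok Phi comb e G"
    and approx: "\<forall>p\<in>Phi. \<forall>x. is_isup Phi comb {a \<in> G. foc a x = a \<and> way_below Phi comb a p} (foc p x)"
    using S unfolding s_continuous_ia_def by blast
  interpret isemilattice Phi comb e using dfia_isemilattice[OF D] .
  have "continuous_isemilattice Phi comb e G"
  proof
    show "G \<subseteq> Phi" "e \<in> G" "\<And>a b. a \<in> G \<Longrightarrow> b \<in> G \<Longrightarrow> comb a b \<in> G"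
      "\<And>X. X \<subseteq> G \<Longrightarrow> idirected comb X \<Longrightarrow> \<exists>s. is_isup Phi comb X s"
      using G unfolding basis_ok_def by blast+
  next
    fix p assume p: "p \<in> Phi"
    have "{a \<in> G. foc a t = a \<and> wb a p} = {a \<in> G. wb a p}"
      using dfia_foc_top[OF D top] G unfolding basis_ok_def by blast
    then show "is_isup Phi comb {a \<in> G. wb a p} p"
      using approx[rule_format, OF p, of t] dfia_foc_top[OF D top p] by simp
  qed
  then show ?thesis by blast
qed

lemma s_continuous_foc_scott_cont:
  assumes S: "s_continuous_ia Phi comb e (foc :: 'a \<Rightarrow> 'd::lattice \<Rightarrow> 'a)"
  shows "scott_cont Phi comb Phi comb (\<lambda>a. foc a x)"
  unfolding scott_cont_def
proof (intro allI impI)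
  fix X s assume X: "X \<subseteq> Phi" "idirected comb X" "is_isup Phi comb X s"
  obtain G where D: "dfia Phi comb e foc" and G: "basis_ok Phi comb e G"
    and approx: "\<forall>p\<in>Phi. \<forall>x. is_isup Phi comb {a \<in> G. foc a x = a \<and> way_below Phi comb a p} (foc p x)"
    using S unfolding s_continuous_ia_def by blast
  interpret isemilattice Phi comb e using dfia_isemilattice[OF D] .
  have s: "s \<in> Phi" using X isup_in by blast
  show "is_isup Phi comb ((\<lambda>a. foc a x) ` X) (foc s x)" unfolding is_isup_def
  proof (intro conjI ballI impI)
    show "foc s x \<in> Phi" using dfia_foc_closed[OF D s] .
  next
    fix b assume "b \<in> (\<lambda>a. foc a x) ` X"
    then obtain c where "c \<in> X" "b = foc c x" by blast
    moreover have "le (foc c x) (foc s x)"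
      using dfia_foc_mono[OF D _ s isup_upper[OF X(3)]] X(1) \<open>c \<in> X\<close> by blast
    ultimately show "le b (foc s x)" by simp
  next
    fix u assume u: "u \<in> Phi" "\<forall>b\<in>(\<lambda>a. foc a x) ` X. le b u"
    \<comment> \<open>s-continuity: it suffices to bound the basis elements that are fixed by focusing on x\<close>
    have "le a u" if a: "a \<in> G" "foc a x = a" "wb a s" for a
    proof -
      have aP: "a \<in> Phi" using a G unfolding basis_ok_def by blast
      obtain c where c: "c \<in> X" "le a c" using a X le_refl[OF s] unfolding way_below_def by blast
      then have "c \<in> Phi" using X by blast
      then have "le (foc a x) (foc c x)" using dfia_foc_mono[OF D aP _ c(2)] by blast
      moreover have "le (foc c x) u" using u c by blast
      ultimately have "le (foc a x) u"
        using le_trans[OF dfia_foc_closed[OF D aP] dfia_foc_closed[OF D \<open>c \<in> Phi\<close>] u(1)] by blast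
      then show "le a u" using a(2) by simp
    qed
    then show "le (foc s x) u" using isup_least[OF approx[rule_format, OF s, of x]] u(1) by blast
  qed
qed

section \<open>The algebra of continuous maps\<close>

lemma cont_maps_ileq_iff:
  assumes g: "g \<in> cont_maps Phi combP Psi combQ"
  shows "ileq (fun_comb Phi combQ) f g \<longleftrightarrow> (\<forall>p\<in>Phi. ileq combQ (f p) (g p))"
proof
  assume "ileq (fun_comb Phi combQ) f g"
  then have "fun_comb Phi combQ f g p = g p" for p unfolding ileq_def by simp
  then show "\<forall>p\<in>Phi. ileq combQ (f p) (g p)" unfolding fun_comb_def ileq_def by (metis (full_types))
next
  assume fg: "\<forall>p\<in>Phi. ileq combQ (f p) (g p)"
  have "fun_comb Phi combQ f g = g"
  proof
    fix p show "fun_comb Phi combQ f g p = g p"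
      using fg cont_maps_undefined[OF g, of p] unfolding fun_comb_def ileq_def by (cases "p \<in> Phi") simp_all
  qed
  then show "ileq (fun_comb Phi combQ) f g" unfolding ileq_def .
qed

lemma fun_comb_in_cont_maps:
  assumes Q: "isemilattice Psi combQ eQ"
    and f: "f \<in> cont_maps Phi combP Psi combQ" and g: "g \<in> cont_maps Phi combP Psi combQ"
  shows "fun_comb Phi combQ f g \<in> cont_maps Phi combP Psi combQ"
proof -
  interpret Q: isemilattice Psi combQ eQ by (fact Q)
  have cont: "scott_cont Phi combP Psi combQ (fun_comb Phi combQ f g)"
    unfolding scott_cont_def
  proof (intro allI impI)
    fix X s assume X: "X \<subseteq> Phi" "idirected combP X" "is_isup Phi combP X s"
    have "s \<in> Phi" using X(3) unfolding is_isup_def by blast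
    then have "fun_comb Phi combQ f g s = combQ (f s) (g s)" unfolding fun_comb_def by simp
    moreover have "fun_comb Phi combQ f g ` X = (\<lambda>p. combQ (f p) (g p)) ` X"
      using X(1) unfolding fun_comb_def by auto
    moreover have "f ` X \<subseteq> Psi" "g ` X \<subseteq> Psi" using X(1) cont_maps_in[OF f] cont_maps_in[OF g] by blast+
    then have "is_isup Psi combQ ((\<lambda>p. combQ (f p) (g p)) ` X) (combQ (f s) (g s))"
      by (rule Q.isup_image_comb[OF _ _ scott_contD[OF cont_maps_scott_cont[OF f] X]
            scott_contD[OF cont_maps_scott_cont[OF g] X]])
    ultimately show "is_isup Psi combQ (fun_comb Phi combQ f g ` X) (fun_comb Phi combQ f g s)"
      by simp
  qed
  moreover have "\<forall>p\<in>Phi. fun_comb Phi combQ f g p \<in> Psi"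
    using cont_maps_in[OF f] cont_maps_in[OF g] Q.comb_closed unfolding fun_comb_def by simp
  moreover have "\<forall>p. p \<notin> Phi \<longrightarrow> fun_comb Phi combQ f g p = undefined"
    unfolding fun_comb_def by simp
  ultimately show ?thesis unfolding cont_maps_iff by blast
qed

lemma fun_neutral_in_cont_maps:
  assumes Q: "isemilattice Psi combQ eQ"
  shows "fun_neutral Phi eQ \<in> cont_maps Phi combP Psi combQ"
proof -
  have "scott_cont Phi combP Psi combQ (fun_neutral Phi eQ)"
    unfolding scott_cont_def
  proof (intro allI impI)
    fix X s assume X: "X \<subseteq> Phi" "idirected combP X" "is_isup Phi combP X s"
    have "s \<in> Phi" "X \<noteq> {}" using X unfolding is_isup_def idirected_def by blast+
    then have "fun_neutral Phi eQ ` X = {eQ}" "fun_neutral Phi eQ s = eQ"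
      using X(1) unfolding fun_neutral_def by auto
    then show "is_isup Psi combQ (fun_neutral Phi eQ ` X) (fun_neutral Phi eQ s)"
      using isemilattice.isup_singleton[OF Q isemilattice.neutral_in[OF Q]] by simp
  qed
  then show ?thesis
    unfolding cont_maps_iff fun_neutral_def using isemilattice.neutral_in[OF Q] by simp
qed

lemma cont_maps_isemilattice:
  assumes Q: "isemilattice Psi combQ eQ"
  shows "isemilattice (cont_maps Phi combP Psi combQ) (fun_comb Phi combQ) (fun_neutral Phi eQ)"
proof -
  interpret Q: isemilattice Psi combQ eQ by (fact Q)
  let ?F = "cont_maps Phi combP Psi combQ"
  show ?thesis
  proof
    fix f g h assume fgh: "f \<in> ?F" "g \<in> ?F" "h \<in> ?F"
    show "fun_comb Phi combQ f g \<in> ?F" using fun_comb_in_cont_maps[OF Q fgh(1,2)] .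
    show "fun_comb Phi combQ (fun_comb Phi combQ f g) h = fun_comb Phi combQ f (fun_comb Phi combQ g h)"
      using cont_maps_in[OF fgh(1)] cont_maps_in[OF fgh(2)] cont_maps_in[OF fgh(3)] Q.comb_assoc
      unfolding fun_comb_def by (intro ext) simp
    show "fun_comb Phi combQ f g = fun_comb Phi combQ g f"
      using cont_maps_in[OF fgh(1)] cont_maps_in[OF fgh(2)] Q.comb_commute
      unfolding fun_comb_def by (intro ext) simp
  next
    show "fun_neutral Phi eQ \<in> ?F" using fun_neutral_in_cont_maps[OF Q] .
  next
    fix f assume f: "f \<in> ?F"
    show "fun_comb Phi combQ f (fun_neutral Phi eQ) = f"
      using cont_maps_in[OF f] cont_maps_undefined[OF f] Q.comb_neutral
      unfolding fun_comb_def fun_neutral_def by (intro ext) simp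
    show "fun_comb Phi combQ f f = f"
      using cont_maps_in[OF f] cont_maps_undefined[OF f] Q.comb_idem
      unfolding fun_comb_def by (intro ext) simp
  qed
qed

lemma scott_cont_cong:
  assumes "scott_cont Phi combP Psi combQ f" "\<And>p. p \<in> Phi \<Longrightarrow> f p = g p"
  shows "scott_cont Phi combP Psi combQ g"
  unfolding scott_cont_def
proof (intro allI impI)
  fix X s assume X: "X \<subseteq> Phi" "idirected combP X" "is_isup Phi combP X s"
  have "s \<in> Phi" using X(3) unfolding is_isup_def by blast
  moreover have "g ` X = f ` X" using X(1) assms(2) by (simp add: subset_iff cong: image_cong)
  ultimately show "is_isup Psi combQ (g ` X) (g s)"
    using scott_contD[OF assms(1) X] assms(2) by simp
qed

lemma (in isemilattice) scott_cont_comp: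
  assumes g: "scott_cont Phi comb Psi combQ g" "\<forall>p\<in>Phi. g p \<in> Psi"
    and h: "scott_cont Psi combQ Chi combR h"
  shows "scott_cont Phi comb Chi combR (\<lambda>p. h (g p))"
  unfolding scott_cont_def
proof (intro allI impI)
  fix X s assume X: "X \<subseteq> Phi" "idirected comb X" "is_isup Phi comb X s"
  have "idirected combQ (g ` X)"
    using idirected_image_mono[OF X(1,2)] scott_cont_mono[OF g(1)] by blast
  moreover have "g ` X \<subseteq> Psi" using X(1) g(2) by blast
  ultimately have "is_isup Chi combR (h ` g ` X) (h (g s))"
    using scott_contD[OF h _ _ scott_contD[OF g(1) X]] by blast
  then show "is_isup Chi combR ((\<lambda>p. h (g p)) ` X) (h (g s))"
    by (simp add: image_image)
qed

lemma fun_foc_apply: "p \<in> Phi \<Longrightarrow> fun_foc Phi focP focQ f (x, y) p = focQ (f (focP p x)) y"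
  unfolding fun_foc_def by simp

lemma fun_foc_outside: "p \<notin> Phi \<Longrightarrow> fun_foc Phi focP focQ f xy p = undefined"
  unfolding fun_foc_def by simp

lemma fun_foc_in_cont_maps:
  assumes SP: "s_continuous_ia Phi combP eP (focP :: 'a \<Rightarrow> 'd::lattice \<Rightarrow> 'a)"
    and SQ: "s_continuous_ia Psi combQ eQ (focQ :: 'b \<Rightarrow> 'e::lattice \<Rightarrow> 'b)"
    and f: "f \<in> cont_maps Phi combP Psi combQ"
  shows "fun_foc Phi focP focQ f xy \<in> cont_maps Phi combP Psi combQ"
proof -
  obtain x y where xy: "xy = (x, y)" by (cases xy)
  have DP: "dfia Phi combP eP focP" and DQ: "dfia Psi combQ eQ focQ"
    using SP SQ unfolding s_continuous_ia_def by blast+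
  interpret P: isemilattice Phi combP eP using dfia_isemilattice[OF DP] .
  have "\<forall>p\<in>Phi. f (focP p x) \<in> Psi" using cont_maps_in[OF f] dfia_foc_closed[OF DP] by blast
  moreover have "scott_cont Phi combP Psi combQ (\<lambda>p. f (focP p x))"
    using P.scott_cont_comp[OF s_continuous_foc_scott_cont[OF SP] _ cont_maps_scott_cont[OF f]]
      dfia_foc_closed[OF DP] by blast
  ultimately have "scott_cont Phi combP Psi combQ (\<lambda>p. focQ (f (focP p x)) y)"
    using P.scott_cont_comp s_continuous_foc_scott_cont[OF SQ] by blast
  then have "scott_cont Phi combP Psi combQ (fun_foc Phi focP focQ f xy)"
    by (rule scott_cont_cong) (simp add: xy fun_foc_apply)
  moreover have "\<forall>p\<in>Phi. fun_foc Phi focP focQ f xy p \<in> Psi"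
    using cont_maps_in[OF f] dfia_foc_closed[OF DP] dfia_foc_closed[OF DQ] by (simp add: xy fun_foc_apply)
  ultimately show ?thesis unfolding cont_maps_iff by (simp add: fun_foc_outside)
qed

context
  fixes Phi :: "'a set" and combP :: "'a \<Rightarrow> 'a \<Rightarrow> 'a" and eP :: 'a and focP :: "'a \<Rightarrow> 'd::lattice \<Rightarrow> 'a"
    and Psi :: "'b set" and combQ :: "'b \<Rightarrow> 'b \<Rightarrow> 'b" and eQ :: 'b and focQ :: "'b \<Rightarrow> 'e::lattice \<Rightarrow> 'b"
  assumes DP: "dfia Phi combP eP focP" and DQ: "dfia Psi combQ eQ focQ"
begin

lemma fun_foc_fun_foc:
  assumes f: "f \<in> cont_maps Phi combP Psi combQ"
  shows "fun_foc Phi focP focQ (fun_foc Phi focP focQ f (y1, y2)) (x1, x2)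
    = fun_foc Phi focP focQ f (inf (x1, x2) (y1, y2))"
proof
  fix p show "fun_foc Phi focP focQ (fun_foc Phi focP focQ f (y1, y2)) (x1, x2) p
    = fun_foc Phi focP focQ f (inf (x1, x2) (y1, y2)) p"
  proof (cases "p \<in> Phi")
    case True
    then have "focP (focP p x1) y1 = focP p (inf x1 y1)"
      using dfia_foc_foc[OF DP True] by (simp add: inf.commute)
    then show ?thesis
      using True dfia_foc_closed[OF DP] dfia_foc_foc[OF DQ cont_maps_in[OF f]]
      by (simp add: fun_foc_apply)
  qed (simp add: fun_foc_outside)
qed

lemma fun_foc_fun_comb:
  assumes f: "f \<in> cont_maps Phi combP Psi combQ" and g: "g \<in> cont_maps Phi combP Psi combQ"
  shows "fun_foc Phi focP focQ (fun_comb Phi combQ (fun_foc Phi focP focQ f (x1, x2)) g) (x1, x2)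
    = fun_comb Phi combQ (fun_foc Phi focP focQ f (x1, x2)) (fun_foc Phi focP focQ g (x1, x2))"
proof
  fix p show "fun_foc Phi focP focQ (fun_comb Phi combQ (fun_foc Phi focP focQ f (x1, x2)) g) (x1, x2) p
    = fun_comb Phi combQ (fun_foc Phi focP focQ f (x1, x2)) (fun_foc Phi focP focQ g (x1, x2)) p"
  proof (cases "p \<in> Phi")
    case True
    have "focP p x1 \<in> Phi" "focP (focP p x1) x1 = focP p x1"
      using dfia_foc_closed[OF DP True] dfia_foc_foc[OF DP True] by simp_all
    then show ?thesis
      using True dfia_foc_comb[OF DQ cont_maps_in[OF f] cont_maps_in[OF g]]
      by (simp add: fun_foc_apply fun_comb_def)
  qed (simp add: fun_foc_outside fun_comb_def)
qed

lemma fun_comb_fun_foc: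
  assumes f: "f \<in> cont_maps Phi combP Psi combQ"
  shows "fun_comb Phi combQ f (fun_foc Phi focP focQ f (x1, x2)) = f"
proof
  interpret P: isemilattice Phi combP eP using dfia_isemilattice[OF DP] .
  interpret Q: isemilattice Psi combQ eQ using dfia_isemilattice[OF DQ] .
  fix p show "fun_comb Phi combQ f (fun_foc Phi focP focQ f (x1, x2)) p = f p"
  proof (cases "p \<in> Phi")
    case True
    have fx: "focP p x1 \<in> Phi" "f (focP p x1) \<in> Psi" "f p \<in> Psi"
      using dfia_foc_closed[OF DP True] cont_maps_in[OF f] True by blast+
    have "Q.le (f (focP p x1)) (f p)"
      using P.scott_cont_mono[OF cont_maps_scott_cont[OF f] fx(1) True dfia_foc_le[OF DP True]] .
    then have "Q.le (focQ (f (focP p x1)) x2) (f p)"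
      using Q.le_trans[OF dfia_foc_closed[OF DQ fx(2)] fx(2,3) dfia_foc_le[OF DQ fx(2)]] by blast
    then show ?thesis
      using True Q.comb_commute[OF fx(3) dfia_foc_closed[OF DQ fx(2)]]
      unfolding ileq_def by (simp add: fun_foc_apply fun_comb_def)
  qed (simp add: fun_comb_def cont_maps_undefined[OF f])
qed

lemma fun_foc_top:
  assumes f: "f \<in> cont_maps Phi combP Psi combQ" and "\<forall>x. x \<le> tP" "\<forall>y. y \<le> tQ"
  shows "fun_foc Phi focP focQ f (tP, tQ) = f"
proof
  fix p show "fun_foc Phi focP focQ f (tP, tQ) p = f p"
    using dfia_foc_top[OF DP] dfia_foc_top[OF DQ] assms cont_maps_in[OF f] cont_maps_undefined[OF f]
    by (cases "p \<in> Phi") (simp_all add: fun_foc_apply fun_foc_outside)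
qed

end

lemma dfia_cont_maps:
  assumes SP: "s_continuous_ia Phi combP eP (focP :: 'a \<Rightarrow> 'd::lattice \<Rightarrow> 'a)"
    and SQ: "s_continuous_ia Psi combQ eQ (focQ :: 'b \<Rightarrow> 'e::lattice \<Rightarrow> 'b)"
  shows "dfia (cont_maps Phi combP Psi combQ) (fun_comb Phi combQ) (fun_neutral Phi eQ)
    (fun_foc Phi focP focQ)"
proof -
  obtain tP :: 'd where tP: "\<forall>x. x \<le> tP" using SP unfolding s_continuous_ia_def by blast
  obtain tQ :: 'e where tQ: "\<forall>x. x \<le> tQ" using SQ unfolding s_continuous_ia_def by blast
  have DP: "dfia Phi combP eP focP" and DQ: "dfia Psi combQ eQ focQ"
    using SP SQ unfolding s_continuous_ia_def by blast+
  let ?F = "cont_maps Phi combP Psi combQ"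
  let ?foc = "fun_foc Phi focP focQ" and ?comb = "fun_comb Phi combQ"
  interpret F: isemilattice ?F ?comb "fun_neutral Phi eQ"
    using cont_maps_isemilattice[OF dfia_isemilattice[OF DQ]] .
  show ?thesis
    unfolding dfia_def
  proof (intro conjI ballI allI)
    fix f g h assume "f \<in> ?F" "g \<in> ?F" "h \<in> ?F"
    then show "?comb f g \<in> ?F" "?comb (?comb f g) h = ?comb f (?comb g h)" "?comb f g = ?comb g f"
      using F.comb_closed F.comb_assoc F.comb_commute by blast+
  next
    show "fun_neutral Phi eQ \<in> ?F" by (rule F.neutral_in)
  next
    fix f x y assume f: "f \<in> ?F"
    then show "?foc f x \<in> ?F" "?comb f (fun_neutral Phi eQ) = f" "?comb f (?foc f x) = f"
      "?foc (?foc f y) x = ?foc f (inf x y)"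
      using fun_foc_in_cont_maps[OF SP SQ] F.comb_neutral fun_comb_fun_foc[OF DP DQ]
        fun_foc_fun_foc[OF DP DQ]
      by (cases x, cases y, blast)+
    show "\<exists>x. ?foc f x = f" using fun_foc_top[OF DP DQ f tP tQ] by blast
  next
    fix f g x assume "f \<in> ?F" "g \<in> ?F"
    then show "?foc (?comb (?foc f x) g) x = ?comb (?foc f x) (?foc g x)"
      using fun_foc_fun_comb[OF DP DQ] by (cases x) blast
  qed
qed

lemma cont_maps_pointwise_idirected:
  assumes X: "X \<subseteq> cont_maps Phi combP Psi combQ" "idirected (fun_comb Phi combQ) X"
    and p: "p \<in> Phi"
  shows "idirected combQ ((\<lambda>g. g p) ` X)"
  unfolding idirected_def
proof (intro conjI ballI)
  show "(\<lambda>g. g p) ` X \<noteq> {}" using X(2) unfolding idirected_def by blast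
next
  fix u v assume "u \<in> (\<lambda>g. g p) ` X" "v \<in> (\<lambda>g. g p) ` X"
  then obtain g1 g2 where g: "g1 \<in> X" "g2 \<in> X" "u = g1 p" "v = g2 p" by blast
  then obtain g where "g \<in> X" "ileq (fun_comb Phi combQ) g1 g" "ileq (fun_comb Phi combQ) g2 g"
    using X(2) unfolding idirected_def by blast
  with X(1) p g have "ileq combQ u (g p)" "ileq combQ v (g p)"
    using cont_maps_ileq_iff[of g] by blast+
  then show "\<exists>c\<in>(\<lambda>g. g p) ` X. ileq combQ u c \<and> ileq combQ v c" using \<open>g \<in> X\<close> by blast
qed

lemma (in isemilattice) pointwise_isup_scott_cont:
  assumes X: "X \<subseteq> cont_maps Psi combQ Phi comb"
    and s: "\<And>p. p \<in> Psi \<Longrightarrow> is_isup Phi comb ((\<lambda>g. g p) ` X) (s p)"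
  shows "scott_cont Psi combQ Phi comb s"
  unfolding scott_cont_def
proof (intro allI impI)
  fix Y q assume Y: "Y \<subseteq> Psi" "idirected combQ Y" "is_isup Psi combQ Y q"
  have q: "q \<in> Psi" using Y(3) unfolding is_isup_def by blast
  have in_Phi: "g p \<in> Phi" if "g \<in> X" "p \<in> Psi" for g p
    using that X cont_maps_in[of g Psi combQ Phi comb p] by blast
  have gY: "is_isup Phi comb (g ` Y) (g q)" if "g \<in> X" for g
    using scott_contD[OF cont_maps_scott_cont Y] X that by (meson subsetD)
  have sq: "s q \<in> Phi" using s[OF q] isup_in by blast
  show "is_isup Phi comb (s ` Y) (s q)" unfolding is_isup_def
  proof (intro conjI ballI impI)
    show "s q \<in> Phi" by (fact sq)
  next
    fix v assume "v \<in> s ` Y"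
    then obtain p where p: "p \<in> Y" "v = s p" by blast
    have "p \<in> Psi" using p Y(1) by blast
    have "le (g p) (s q)" if "g \<in> X" for g
      using le_trans[OF in_Phi[OF that \<open>p \<in> Psi\<close>] in_Phi[OF that q] sq]
        isup_upper[OF gY[OF that] imageI[OF p(1)]] isup_upper[OF s[OF q] imageI[OF that]] by blast
    then show "le v (s q)" using isup_least[OF s[OF \<open>p \<in> Psi\<close>] sq] p(2) by blast
  next
    fix u assume u: "u \<in> Phi" "\<forall>v\<in>s ` Y. le v u"
    have "le (g q) u" if g: "g \<in> X" for g
    proof (rule isup_least[OF gY[OF g] u(1)])
      fix w assume "w \<in> g ` Y"
      then obtain p where p: "p \<in> Y" "w = g p" by blast
      then have "p \<in> Psi" using Y(1) by blast
      then show "le w u"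
        using le_trans[OF in_Phi[OF g] _ u(1) isup_upper[OF s imageI[OF g]]] isup_in[OF s] u(2) p
        by blast
    qed
    then show "le (s q) u" using isup_least[OF s[OF q] u(1)] by blast
  qed
qed

lemma cont_maps_isup:
  assumes Q: "continuous_isemilattice Psi combQ eQ GQ"
    and X: "X \<subseteq> cont_maps Phi combP Psi combQ" "idirected (fun_comb Phi combQ) X"
  obtains s where "is_isup (cont_maps Phi combP Psi combQ) (fun_comb Phi combQ) X s"
    and "\<And>p. p \<in> Phi \<Longrightarrow> is_isup Psi combQ ((\<lambda>g. g p) ` X) (s p)"
proof -
  interpret Q: continuous_isemilattice Psi combQ eQ GQ by (fact Q)
  let ?F = "cont_maps Phi combP Psi combQ"
  define s where "s p = (if p \<in> Phi then SOME v. is_isup Psi combQ ((\<lambda>g. g p) ` X) v else undefined)"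
    for p
  have s_isup: "is_isup Psi combQ ((\<lambda>g. g p) ` X) (s p)" if p: "p \<in> Phi" for p
  proof -
    have "(\<lambda>g. g p) ` X \<subseteq> Psi" using X(1) p cont_maps_in[of _ Phi combP Psi combQ p] by blast
    then obtain v where "is_isup Psi combQ ((\<lambda>g. g p) ` X) v"
      using Q.isup_exists[OF _ cont_maps_pointwise_idirected[OF X p]] by blast
    then show ?thesis unfolding s_def using p someI[of "is_isup Psi combQ ((\<lambda>g. g p) ` X)"] by simp
  qed
  have "scott_cont Phi combP Psi combQ s" by (rule Q.pointwise_isup_scott_cont[OF X(1) s_isup])
  moreover have "\<forall>p\<in>Phi. s p \<in> Psi" using s_isup Q.isup_in by blast
  ultimately have sF: "s \<in> ?F" unfolding cont_maps_iff by (simp add: s_def)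
  have "is_isup ?F (fun_comb Phi combQ) X s" unfolding is_isup_def
  proof (intro conjI ballI impI)
    show "s \<in> ?F" by (fact sF)
  next
    fix g assume "g \<in> X"
    then show "ileq (fun_comb Phi combQ) g s"
      unfolding cont_maps_ileq_iff[OF sF] using s_isup Q.isup_upper by blast
  next
    fix u assume u: "u \<in> ?F" "\<forall>g\<in>X. ileq (fun_comb Phi combQ) g u"
    have "Q.le (s p) (u p)" if p: "p \<in> Phi" for p
      using Q.isup_least[OF s_isup[OF p] cont_maps_in[OF u(1) p]] u cont_maps_ileq_iff[OF u(1)] p
      by blast
    then show "ileq (fun_comb Phi combQ) s u" unfolding cont_maps_ileq_iff[OF u(1)] by blast
  qed
  then show ?thesis using that s_isup by blast
qed

section \<open>Step functions\<close>

definition step_fun :: "'a set \<Rightarrow> ('a \<Rightarrow> 'a \<Rightarrow> 'a) \<Rightarrow> 'b \<Rightarrow> 'a \<Rightarrow> 'b \<Rightarrow> 'a \<Rightarrow> 'b" where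
  "step_fun Phi combP eQ a b =
    (\<lambda>q. if q \<in> Phi then if way_below Phi combP a q then b else eQ else undefined)"

lemma step_fun_in_cont_maps:
  assumes P: "continuous_isemilattice Phi combP eP GP" and Q: "isemilattice Psi combQ eQ"
    and a: "a \<in> Phi" and b: "b \<in> Psi"
  shows "step_fun Phi combP eQ a b \<in> cont_maps Phi combP Psi combQ"
proof -
  interpret P: continuous_isemilattice Phi combP eP GP by (fact P)
  interpret Q: isemilattice Psi combQ eQ by (fact Q)
  let ?\<sigma> = "step_fun Phi combP eQ a b"
  have "scott_cont Phi combP Psi combQ ?\<sigma>" unfolding scott_cont_def
  proof (intro allI impI)
    fix X s assume X: "X \<subseteq> Phi" "idirected combP X" "is_isup Phi combP X s"
    have s: "s \<in> Phi" using X P.isup_in by blast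
    have "X \<noteq> {}" using X(2) unfolding idirected_def by blast
    show "is_isup Psi combQ (?\<sigma> ` X) (?\<sigma> s)"
    proof (cases "P.wb a s")
      case True
      \<comment> \<open>the set of points way above \<open>a\<close> is Scott open, so the step is already reached in \<open>X\<close>\<close>
      then obtain x where "x \<in> X" "P.wb a x" using P.way_below_isup_member[OF X a True] by blast
      then have "b \<in> ?\<sigma> ` X" using X(1) unfolding step_fun_def by force
      moreover have "?\<sigma> ` X \<subseteq> {b, eQ}" using X(1) unfolding step_fun_def by auto
      ultimately show ?thesis
        using True s b Q.le_refl[OF b] Q.neutral_le[OF b]
        unfolding is_isup_def step_fun_def by auto
    next
      case False
      have "\<not> P.wb a x" if "x \<in> X" for x
        using False P.way_below_mono_right[OF _ s _ P.isup_upper[OF X(3) that]] X(1) that by blast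
      then have "?\<sigma> ` X = {eQ}" using X(1) \<open>X \<noteq> {}\<close> unfolding step_fun_def by auto
      then show ?thesis
        using False s Q.isup_singleton[OF Q.neutral_in] unfolding step_fun_def by simp
    qed
  qed
  then show ?thesis
    unfolding cont_maps_iff step_fun_def using b Q.neutral_in by simp
qed

text \<open>Directed suprema of maps are pointwise, so \<open>b \<lless> f a \<le> \<Squnion>\<^sub>g\<^sub>\<in>\<^sub>X g a\<close> yields some
  \<open>g \<in> X\<close> with \<open>b \<le> g a\<close>, and monotonicity of \<open>g\<close> puts the step function below \<open>g\<close>.\<close>

lemma step_fun_way_below:
  assumes P: "isemilattice Phi combP eP" and Q: "continuous_isemilattice Psi combQ eQ GQ"
    and a: "a \<in> Phi" and b: "b \<in> Psi" and f: "f \<in> cont_maps Phi combP Psi combQ"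
    and w: "way_below Psi combQ b (f a)"
  shows "way_below (cont_maps Phi combP Psi combQ) (fun_comb Phi combQ) (step_fun Phi combP eQ a b) f"
  unfolding way_below_def[of "cont_maps Phi combP Psi combQ"]
proof (intro allI impI)
  interpret P: isemilattice Phi combP eP by (fact P)
  interpret Q: continuous_isemilattice Psi combQ eQ GQ by (fact Q)
  let ?F = "cont_maps Phi combP Psi combQ" and ?\<sigma> = "step_fun Phi combP eQ a b"
  interpret F: isemilattice ?F "fun_comb Phi combQ" "fun_neutral Phi eQ"
    using cont_maps_isemilattice[OF Q.isemilattice_axioms] .
  fix X s assume X: "X \<subseteq> ?F" "idirected (fun_comb Phi combQ) X"
    "is_isup ?F (fun_comb Phi combQ) X s" "F.le f s"
  obtain s' where s': "is_isup ?F (fun_comb Phi combQ) X s'"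
    and pointwise: "\<And>p. p \<in> Phi \<Longrightarrow> is_isup Psi combQ ((\<lambda>g. g p) ` X) (s' p)"
    using cont_maps_isup[OF Q X(1,2)] by blast
  have "s' = s" using F.isup_unique[OF s' X(3)] .
  have sF: "s \<in> ?F" using X(3) F.isup_in by blast
  have "Q.le (f a) (s a)" using X(4) cont_maps_ileq_iff[OF sF] a by blast
  then have "Q.wb b (s a)"
    using Q.way_below_mono_right[OF cont_maps_in[OF f a] cont_maps_in[OF sF a] w] by blast
  moreover have "(\<lambda>g. g a) ` X \<subseteq> Psi" using X(1) a cont_maps_in[of _ Phi combP Psi combQ a] by blast
  ultimately obtain g where g: "g \<in> X" "Q.le b (g a)"
    using pointwise[OF a] cont_maps_pointwise_idirected[OF X(1,2) a] Q.le_refl[OF cont_maps_in[OF sF a]]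
      \<open>s' = s\<close> unfolding way_below_def by blast
  then have gF: "g \<in> ?F" using X(1) by blast
  have "Q.le (?\<sigma> q) (g q)" if q: "q \<in> Phi" for q
  proof (cases "P.wb a q")
    case True
    then have "Q.le (g a) (g q)"
      using P.scott_cont_mono[OF cont_maps_scott_cont[OF gF] a q P.way_below_le[OF q]] by blast
    then show ?thesis
      using True q g(2) Q.le_trans[OF b cont_maps_in[OF gF a] cont_maps_in[OF gF q]]
      unfolding step_fun_def by simp
  next
    case False
    then show ?thesis using q Q.neutral_le[OF cont_maps_in[OF gF q]] unfolding step_fun_def by simp
  qed
  then show "\<exists>c\<in>X. F.le ?\<sigma> c" using g(1) cont_maps_ileq_iff[OF gF] by blast
qed

lemma cont_map_way_below_witness:
  assumes P: "continuous_isemilattice Phi combP eP GP" and Q: "continuous_isemilattice Psi combQ eQ GQ"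
    and f: "f \<in> cont_maps Phi combP Psi combQ" and p: "p \<in> Phi"
    and b: "b \<in> Psi" and w: "way_below Psi combQ b (f p)"
  shows "\<exists>a\<in>Phi. way_below Phi combP a p \<and> way_below Psi combQ b (f a)"
proof -
  interpret P: continuous_isemilattice Phi combP eP GP by (fact P)
  interpret Q: continuous_isemilattice Psi combQ eQ GQ by (fact Q)
  have fp: "f p \<in> Psi" using cont_maps_in[OF f p] .
  obtain b' where b': "b' \<in> Psi" "Q.wb b b'" "Q.wb b' (f p)"
    using Q.way_below_interpolate[OF b fp w] by blast
  define A where "A = {a \<in> GP. P.wb a p}"
  have A: "A \<subseteq> Phi" "idirected combP A" "is_isup Phi combP A p"
    unfolding A_def using P.basis_subset P.basis_approx_idirected[OF p] P.basis_approx[OF p] by blast+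
  have "f ` A \<subseteq> Psi" using A(1) cont_maps_in[OF f] by blast
  moreover have "idirected combQ (f ` A)"
    using P.idirected_image_mono[OF A(1,2)] P.scott_cont_mono[OF cont_maps_scott_cont[OF f]] by blast
  moreover have "is_isup Psi combQ (f ` A) (f p)" using scott_contD[OF cont_maps_scott_cont[OF f] A] .
  ultimately obtain a where a: "a \<in> A" "Q.le b' (f a)"
    using b'(3) Q.le_refl[OF fp] unfolding way_below_def by blast
  then have "a \<in> Phi" "P.wb a p" using A(1) unfolding A_def by blast+
  moreover have "Q.wb b (f a)"
    using Q.way_below_mono_right[OF b'(1) cont_maps_in[OF f \<open>a \<in> Phi\<close>] b'(2) a(2)] .
  ultimately show ?thesis by blast
qed

text \<open>An upper bound \<open>u\<close> of the maps way below \<open>f\<close> lies above all step functions way below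
  \<open>f\<close>, and these already determine \<open>f\<close> pointwise.\<close>

lemma cont_maps_approx:
  assumes P: "continuous_isemilattice Phi combP eP GP" and Q: "continuous_isemilattice Psi combQ eQ GQ"
    and f: "f \<in> cont_maps Phi combP Psi combQ"
  shows "is_isup (cont_maps Phi combP Psi combQ) (fun_comb Phi combQ)
    {g \<in> cont_maps Phi combP Psi combQ. way_below (cont_maps Phi combP Psi combQ) (fun_comb Phi combQ) g f} f"
proof -
  interpret P: continuous_isemilattice Phi combP eP GP by (fact P)
  interpret Q: continuous_isemilattice Psi combQ eQ GQ by (fact Q)
  let ?F = "cont_maps Phi combP Psi combQ"
  interpret F: isemilattice ?F "fun_comb Phi combQ" "fun_neutral Phi eQ"
    using cont_maps_isemilattice[OF Q.isemilattice_axioms] .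
  show ?thesis unfolding is_isup_def
  proof (intro conjI ballI impI)
    show "f \<in> ?F" by (fact f)
  next
    fix g assume "g \<in> {g \<in> ?F. F.wb g f}"
    then show "F.le g f" using F.way_below_le[OF f] by blast
  next
    fix u assume u: "u \<in> ?F" "\<forall>g\<in>{g \<in> ?F. F.wb g f}. F.le g u"
    have "Q.le b (u p)" if p: "p \<in> Phi" and b: "b \<in> GQ" "Q.wb b (f p)" for p b
    proof -
      have bP: "b \<in> Psi" using Q.basis_in[OF b(1)] .
      obtain a where a: "a \<in> Phi" "P.wb a p" "Q.wb b (f a)"
        using cont_map_way_below_witness[OF P Q f p bP b(2)] by blast
      have "step_fun Phi combP eQ a b \<in> ?F"
        using step_fun_in_cont_maps[OF P Q.isemilattice_axioms a(1) bP] .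
      moreover have "F.wb (step_fun Phi combP eQ a b) f"
        using step_fun_way_below[OF P.isemilattice_axioms Q a(1) bP f a(3)] .
      ultimately have "F.le (step_fun Phi combP eQ a b) u" using u(2) by blast
      then show ?thesis using cont_maps_ileq_iff[OF u(1)] p a(2) unfolding step_fun_def by force
    qed
    then have "Q.le (f p) (u p)" if "p \<in> Phi" for p
      using Q.isup_least[OF Q.basis_approx[OF cont_maps_in[OF f that]] cont_maps_in[OF u(1) that]] that
      by blast
    then show "F.le f u" using cont_maps_ileq_iff[OF u(1)] by blast
  qed
qed

theorem lemma3p13:
  fixes Phi :: "'a set" and combP :: "'a \<Rightarrow> 'a \<Rightarrow> 'a" and eP :: 'a
    and focP :: "'a \<Rightarrow> 'd::lattice \<Rightarrow> 'a"
    and Psi :: "'b set" and combQ :: "'b \<Rightarrow> 'b \<Rightarrow> 'b" and eQ :: 'b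
    and focQ :: "'b \<Rightarrow> 'e::lattice \<Rightarrow> 'b"
  assumes "s_continuous_ia Phi combP eP focP"
    and "s_continuous_ia Psi combQ eQ focQ"
  shows "continuous_ia (cont_maps Phi combP Psi combQ) (fun_comb Phi combQ)
           (fun_neutral Phi eQ) (fun_foc Phi focP focQ)"
proof -
  let ?F = "cont_maps Phi combP Psi combQ"
  obtain GP GQ where P: "continuous_isemilattice Phi combP eP GP"
    and Q: "continuous_isemilattice Psi combQ eQ GQ"
    using s_continuous_continuous_isemilattice assms by metis
  have D: "dfia ?F (fun_comb Phi combQ) (fun_neutral Phi eQ) (fun_foc Phi focP focQ)"
    using dfia_cont_maps[OF assms] .
  obtain tP :: 'd and tQ :: 'e where "\<forall>x. x \<le> tP" "\<forall>y. y \<le> tQ"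
    using assms unfolding s_continuous_ia_def by blast
  then have "\<forall>xy. xy \<le> (tP, tQ)" by (simp add: less_eq_prod_def)
  \<comment> \<open>the whole function space serves as basis\<close>
  moreover have "basis_ok ?F (fun_comb Phi combQ) (fun_neutral Phi eQ) ?F"
    using isemilattice.comb_closed[OF dfia_isemilattice[OF D]] isemilattice.neutral_in[OF dfia_isemilattice[OF D]]
      cont_maps_isup[OF Q]
    unfolding basis_ok_def by (metis order_refl)
  moreover have "\<forall>f\<in>?F. is_isup ?F (fun_comb Phi combQ) {g \<in> ?F. way_below ?F (fun_comb Phi combQ) g f} f"
    using cont_maps_approx[OF P Q] by blast
  ultimately show ?thesis unfolding continuous_ia_def using D by blast
qed

end
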